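(* Let $G$ be a finite simple 3-regular circle graph that is not isomorphic to $K_4$ or to $K_{3,3}$. Then $G$ is not 3-connected.
   Context: A double occurrence word is a finite sequence in which $n$ distinct letters appear, each exactly twice; its interlacement graph has the letters as vertices, with $a,b$ adjacent iff they appear in the order $abab$ or $baba$. A circle graph is a simple graph isomorphic to the interlacement graph of a double occurrence word. *)

theory Defs
  imports Main
begin

definition simple_graph :: "'a set \<Rightarrow> ('a \<Rightarrow> 'a \<Rightarrow> bool) \<Rightarrow> bool" where
  "simple_graph V E \<longleftrightarrow> finite V \<and> (\<forall>x y. E x y \<longrightarrow> x \<in> V \<and> y \<in> V)
     \<and> (\<forall>x y. E x y \<longrightarrow> E y x) \<and> (\<forall>x. \<not> E x x)"

definition graph_iso :: "'a set \<Rightarrow> ('a \<Rightarrow> 'a \<Rightarrow> bool) \<Rightarrow> 'b set \<Rightarrow> ('b \<Rightarrow> 'b \<Rightarrow> bool) \<Rightarrow> bool" where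
  "graph_iso V E V' E' \<longleftrightarrow> (\<exists>f. bij_betw f V V' \<and> (\<forall>x\<in>V. \<forall>y\<in>V. E x y \<longleftrightarrow> E' (f x) (f y)))"

definition degree :: "'a set \<Rightarrow> ('a \<Rightarrow> 'a \<Rightarrow> bool) \<Rightarrow> 'a \<Rightarrow> nat" where
  "degree V E v = card {u \<in> V. E v u}"

definition regular :: "nat \<Rightarrow> 'a set \<Rightarrow> ('a \<Rightarrow> 'a \<Rightarrow> bool) \<Rightarrow> bool" where
  "regular k V E \<longleftrightarrow> (\<forall>v\<in>V. degree V E v = k)"

definition K4_V :: "nat set" where "K4_V = {0..<4}"
definition K4_E :: "nat \<Rightarrow> nat \<Rightarrow> bool" where
  "K4_E x y \<longleftrightarrow> x \<in> K4_V \<and> y \<in> K4_V \<and> x \<noteq> y"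

definition K33_V :: "nat set" where "K33_V = {0..<6}"
definition K33_E :: "nat \<Rightarrow> nat \<Rightarrow> bool" where
  "K33_E x y \<longleftrightarrow> x \<in> K33_V \<and> y \<in> K33_V \<and> ((x < 3) \<noteq> (y < 3))"

definition connected_on :: "('a \<Rightarrow> 'a \<Rightarrow> bool) \<Rightarrow> 'a set \<Rightarrow> bool" where
  "connected_on E S \<longleftrightarrow> S \<noteq> {} \<and>
     (\<forall>x\<in>S. \<forall>y\<in>S. (\<lambda>u v. u \<in> S \<and> v \<in> S \<and> E u v)\<^sup>*\<^sup>* x y)"

definition k_connected :: "nat \<Rightarrow> 'a set \<Rightarrow> ('a \<Rightarrow> 'a \<Rightarrow> bool) \<Rightarrow> bool" where
  "k_connected k V E \<longleftrightarrow> card V > k \<and>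
     (\<forall>X. X \<subseteq> V \<and> card X < k \<longrightarrow> connected_on E (V - X))"

definition double_occurrence_word :: "'b list \<Rightarrow> bool" where
  "double_occurrence_word w \<longleftrightarrow> (\<forall>a\<in>set w. count_list w a = 2)"

definition interlaced :: "'b list \<Rightarrow> 'b \<Rightarrow> 'b \<Rightarrow> bool" where
  "interlaced w a b \<longleftrightarrow> a \<noteq> b \<and>
     (\<exists>i j k l. i < j \<and> j < k \<and> k < l \<and> l < length w \<and>
        ((w!i = a \<and> w!j = b \<and> w!k = a \<and> w!l = b) \<or>
         (w!i = b \<and> w!j = a \<and> w!k = b \<and> w!l = a)))"

definition circle_graph :: "'a set \<Rightarrow> ('a \<Rightarrow> 'a \<Rightarrow> bool) \<Rightarrow> bool" where
  "circle_graph V E \<longleftrightarrow> simple_graph V E \<and>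
     (\<exists>w :: nat list. double_occurrence_word w \<and> graph_iso V E (set w) (interlaced w))"

end

theory Submission
  imports Defs
begin

text \<open>Read a double occurrence word cyclically, with integer positions taken modulo its length.
  Two letters are interlaced iff one of them occurs exactly once strictly between the two
  occurrences of the other (on a chord). If the interlacement graph is cubic, a chord of
  length d therefore encloses three letters once and (d - 4)/2 letters twice. If the graph is
  3-connected, an arc containing some letter twice and another letter not at all is crossed
  by at least three letters, since these separate the two.

  A shortest chord has length 4, and the second fact propagates it: the letters at k + 3m and
  k + 3m + 4 agree for all m. So the letters at positions of residue 2 modulo 3 (relative to k)
  pair only among themselves, and a shortest such chord has length 6. Analysing the chord that
  crosses it forces the word to have length 12 and to be, up to rotation,
  y a b z c a y d c z b d, whose interlacement graph is K_{3,3}. With four letters, a cubic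
  graph is K_4.\<close>

section \<open>Graph isomorphisms and small cubic graphs\<close>

lemma graph_iso_trans:
  assumes "graph_iso V E V' E'" and "graph_iso V' E' V'' E''"
  shows "graph_iso V E V'' E''"
proof -
  obtain f where f: "bij_betw f V V'" "\<forall>x\<in>V. \<forall>y\<in>V. E x y \<longleftrightarrow> E' (f x) (f y)"
    using assms(1) by (auto simp: graph_iso_def)
  obtain g where g: "bij_betw g V' V''" "\<forall>x\<in>V'. \<forall>y\<in>V'. E' x y \<longleftrightarrow> E'' (g x) (g y)"
    using assms(2) by (auto simp: graph_iso_def)
  have "\<forall>x\<in>V. \<forall>y\<in>V. E x y \<longleftrightarrow> E'' ((g \<circ> f) x) ((g \<circ> f) y)"
    using f g bij_betwE[OF f(1)] by simp
  with bij_betw_trans[OF f(1) g(1)] show ?thesis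
    unfolding graph_iso_def by blast
qed

lemma graph_iso_regular:
  assumes "graph_iso V E V' E'" and "regular k V E"
  shows "regular k V' E'"
  unfolding regular_def
proof
  fix v' assume "v' \<in> V'"
  obtain f where f: "bij_betw f V V'" "\<forall>x\<in>V. \<forall>y\<in>V. E x y \<longleftrightarrow> E' (f x) (f y)"
    using assms(1) by (auto simp: graph_iso_def)
  then obtain v where v: "v \<in> V" "v' = f v"
    using \<open>v' \<in> V'\<close> by (auto simp: bij_betw_def)
  have "{u'\<in>V'. E' v' u'} = f ` {u\<in>V. E v u}"
    using f v by (auto simp: bij_betw_def)
  moreover have "inj_on f {u\<in>V. E v u}"
    using f(1) by (auto simp: bij_betw_def intro: inj_on_subset)
  ultimately have "degree V' E' v' = degree V E v"
    by (simp add: degree_def card_image)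
  thus "degree V' E' v' = k"
    using assms(2) v(1) by (simp add: regular_def)
qed

lemma connected_on_image:
  assumes f: "inj_on f V" "\<forall>x\<in>V. \<forall>y\<in>V. E x y \<longleftrightarrow> E' (f x) (f y)"
    and "S \<subseteq> V" and "connected_on E S"
  shows "connected_on E' (f ` S)"
proof -
  have path: "(\<lambda>u v. u \<in> f ` S \<and> v \<in> f ` S \<and> E' u v)\<^sup>*\<^sup>* (f x) (f y)"
    if "(\<lambda>u v. u \<in> S \<and> v \<in> S \<and> E u v)\<^sup>*\<^sup>* x y" for x y
    using that
  proof (induction rule: rtranclp_induct)
    case (step y z)
    then have "f y \<in> f ` S" "f z \<in> f ` S" "E' (f y) (f z)"
      using f(2) \<open>S \<subseteq> V\<close> by auto
    with step.IH show ?case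
      by (simp add: rtranclp.rtrancl_into_rtrancl)
  qed simp
  show ?thesis
    using assms(4) by (auto simp: connected_on_def intro!: path)
qed

lemma graph_iso_k_connected:
  assumes "graph_iso V E V' E'" and "k_connected k V E"
  shows "k_connected k V' E'"
proof -
  obtain f where f: "bij_betw f V V'" "\<forall>x\<in>V. \<forall>y\<in>V. E x y \<longleftrightarrow> E' (f x) (f y)"
    using assms(1) by (auto simp: graph_iso_def)
  have inj: "inj_on f V" and img: "f ` V = V'"
    using f(1) by (auto simp: bij_betw_def)
  have "connected_on E' (V' - X')" if X': "X' \<subseteq> V'" "card X' < k" for X'
  proof -
    define X where "X = {v\<in>V. f v \<in> X'}"
    have X: "X \<subseteq> V"
      by (auto simp: X_def)
    have "f ` X = X'"
      using X'(1) img by (auto simp: X_def)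
    moreover have "inj_on f X"
      using inj X by (rule inj_on_subset)
    ultimately have "card X = card X'"
      using card_image by metis
    then have "connected_on E (V - X)"
      using assms(2) X'(2) X unfolding k_connected_def by simp
    moreover have "f ` (V - X) = V' - X'"
      using img by (auto simp: X_def)
    ultimately show ?thesis
      using connected_on_image[OF inj f(2), of "V - X"] by auto
  qed
  moreover have "card V' = card V"
    using f(1) by (simp add: bij_betw_same_card)
  ultimately show ?thesis
    using assms(2) by (simp add: k_connected_def)
qed

lemma regular3_card4_iso_K4:
  assumes "simple_graph V E" and "regular 3 V E" and "card V = 4"
  shows "graph_iso V E K4_V K4_E"
proof -
  have fin: "finite V"
    using assms(1) by (simp add: simple_graph_def)
  have adj: "E x y \<longleftrightarrow> x \<noteq> y" if "x \<in> V" "y \<in> V" for x y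
  proof -
    have sub: "{u\<in>V. E x u} \<subseteq> V - {x}"
      using assms(1) by (auto simp: simple_graph_def)
    moreover have "card {u\<in>V. E x u} = card (V - {x})"
      using assms(2,3) that fin by (simp add: regular_def degree_def)
    ultimately have "{u\<in>V. E x u} = V - {x}"
      using fin by (metis card_subset_eq finite_Diff)
    thus ?thesis
      using that by blast
  qed
  have "\<exists>g. bij_betw g V K4_V"
    by (rule finite_same_card_bij[OF fin]) (auto simp: K4_V_def assms(3))
  then obtain g where g: "bij_betw g V K4_V" ..
  have "\<forall>x\<in>V. \<forall>y\<in>V. E x y \<longleftrightarrow> K4_E (g x) (g y)"
    using g adj by (auto simp: K4_E_def bij_betw_def inj_on_def)
  with g show ?thesis
    unfolding graph_iso_def by blast
qed

lemma regular3_complete_bipartite_iso_K33: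
  assumes "regular 3 V E" and "V = A \<union> B" and "A \<inter> B = {}"
    and "card A = 3" and "card B = 3"
    and "\<And>a b. a \<in> A \<Longrightarrow> b \<in> B \<Longrightarrow> E a b \<and> E b a"
  shows "graph_iso V E K33_V K33_E"
proof -
  have fin: "finite A" "finite B"
    using assms(4,5) by (auto intro: card_ge_0_finite)
  have adj: "E x y \<longleftrightarrow> (x \<in> A) \<noteq> (y \<in> A)" if "x \<in> V" "y \<in> V" for x y
  proof -
    let ?N = "if x \<in> A then B else A"
    have sub: "?N \<subseteq> {u\<in>V. E x u}"
      using assms(2,3,6) that by auto
    have "card ?N = card {u\<in>V. E x u}"
      using assms(1,4,5) that by (simp add: regular_def degree_def)
    moreover have "finite {u\<in>V. E x u}"
      using assms(2) fin by simp
    ultimately have "{u\<in>V. E x u} = ?N"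
      using card_subset_eq sub by blast
    then have "E x y \<longleftrightarrow> y \<in> ?N"
      using that by blast
    thus ?thesis
      using that assms(2,3) by auto
  qed
  have "\<exists>ha. bij_betw ha A {0..<3::nat}"
    by (rule finite_same_card_bij) (use fin assms(4) in auto)
  then obtain ha where ha: "bij_betw ha A {0..<3::nat}" ..
  have "\<exists>hb. bij_betw hb B {3..<6::nat}"
    by (rule finite_same_card_bij) (use fin assms(5) in auto)
  then obtain hb where hb: "bij_betw hb B {3..<6::nat}" ..
  define h where "h x = (if x \<in> A then ha x else hb x)" for x
  have "bij_betw h A {0..<3::nat}"
    using ha by (rule bij_betw_cong[THEN iffD1, rotated]) (simp add: h_def)
  moreover have "bij_betw h B {3..<6::nat}"
    using hb by (rule bij_betw_cong[THEN iffD1, rotated]) (use assms(3) in \<open>auto simp: h_def\<close>)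
  moreover have "{0..<3::nat} \<union> {3..<6::nat} = K33_V"
    by (auto simp: K33_V_def)
  ultimately have h: "bij_betw h V K33_V"
    using bij_betw_combine[of h A "{0..<3::nat}" B "{3..<6::nat}"] assms(2) by auto
  have side: "h x < 3 \<longleftrightarrow> x \<in> A" if "x \<in> V" for x
    using that assms(2,3) bij_betwE[OF ha] bij_betwE[OF hb] by (auto simp: h_def)
  have "\<forall>x\<in>V. \<forall>y\<in>V. E x y \<longleftrightarrow> K33_E (h x) (h y)"
    using adj side bij_betwE[OF h] by (simp add: K33_E_def)
  with h show ?thesis
    unfolding graph_iso_def by blast
qed

section \<open>Double occurrence words read cyclically\<close>

lemma sum_le_2_eq_card:
  fixes f :: "'b \<Rightarrow> nat"
  assumes "finite S" and "\<forall>b\<in>S. f b \<le> 2"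
  shows "(\<Sum>b\<in>S. f b) = card {b\<in>S. f b = 1} + 2 * card {b\<in>S. f b = 2}"
  using assms
proof (induction S rule: finite_induct)
  case (insert x F)
  have "{b\<in>insert x F. f b = 1} = (if f x = 1 then insert x {b\<in>F. f b = 1} else {b\<in>F. f b = 1})"
    and "{b\<in>insert x F. f b = 2} = (if f x = 2 then insert x {b\<in>F. f b = 2} else {b\<in>F. f b = 2})"
    by auto
  moreover have "f x = 0 \<or> f x = 1 \<or> f x = 2"
    using insert.prems by auto
  ultimately show ?case
    using insert by auto
qed simp

lemma card3_no_four_distinct:
  assumes "card S = 3" and "{a, b, c, d} \<subseteq> S"
  shows "\<not> distinct [a, b, c, d]"
proof
  assume "distinct [a, b, c, d]"
  then have "card {a, b, c, d} = 4"
    by simp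
  moreover have "finite S"
    using assms(1) by (simp add: card_ge_0_finite)
  ultimately show False
    using card_mono[OF _ assms(2)] assms(1) by simp
qed

lemma length_double_occurrence_word:
  assumes "double_occurrence_word w"
  shows "length w = 2 * card (set w)"
proof -
  have "length w = sum (count_list w) (set w)"
    by (rule sum_count_set[symmetric]) auto
  also have "\<dots> = sum (\<lambda>_. 2) (set w)"
    by (rule sum.cong) (use assms in \<open>auto simp: double_occurrence_word_def\<close>)
  finally show ?thesis
    by simp
qed

lemma finite_positions: "finite {e\<in>{lo..<hi::int}. P e}"
  by (rule finite_subset[of _ "{lo..<hi}"]) auto

locale cyclic_word =
  fixes w :: "nat list"
  assumes dow: "double_occurrence_word w" and nonempty: "w \<noteq> []"
begin

definition L :: int where "L = int (length w)"

definition letter :: "int \<Rightarrow> nat" where "letter p = w ! nat (p mod L)"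

definition occ :: "int set \<Rightarrow> nat \<Rightarrow> nat" where "occ A b = card {e\<in>A. letter e = b}"

lemma L_pos: "L > 0"
  using nonempty by (simp add: L_def)

lemma letter_mod: "letter (p mod L) = letter p"
  by (simp add: letter_def)

lemma letter_periodic: "letter (p + L * t) = letter p"
  by (simp add: letter_def)

lemma letter_add_L: "letter (p + L) = letter p"
  using letter_periodic[of p 1] by simp

lemma letter_nth: "0 \<le> x \<Longrightarrow> x < L \<Longrightarrow> letter x = w ! nat x"
  by (simp add: letter_def)

lemma letter_in_set: "letter p \<in> set w"
proof -
  have "nat (p mod L) < length w"
    using L_pos by (simp add: L_def nat_less_iff)
  thus ?thesis
    by (simp add: letter_def)
qed

lemma card_positions_letter:
  assumes "b \<in> set w"
  shows "card {r\<in>{0..<L}. letter r = b} = 2"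
proof -
  have "{r\<in>{0..<L}. letter r = b} = int ` {i. i < length w \<and> w ! i = b}"
  proof (rule set_eqI, rule iffI)
    fix r assume "r \<in> {r\<in>{0..<L}. letter r = b}"
    then have "r = int (nat r)" "nat r < length w" "w ! nat r = b"
      by (auto simp: letter_def L_def)
    thus "r \<in> int ` {i. i < length w \<and> w ! i = b}"
      by blast
  next
    fix r assume "r \<in> int ` {i. i < length w \<and> w ! i = b}"
    then obtain i where "r = int i" "i < length w" "w ! i = b"
      by blast
    thus "r \<in> {r\<in>{0..<L}. letter r = b}"
      by (auto simp: letter_def L_def)
  qed
  moreover have "card {i. i < length w \<and> w ! i = b} = count_list w b"
    by (simp add: count_list_eq_length_filter length_filter_conv_card eq_commute)
  ultimately show ?thesis
    using dow assms by (simp add: card_image double_occurrence_word_def)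
qed

lemma inj_on_mod_window: "inj_on (\<lambda>e. e mod L) {lo..<lo+L}"
proof (rule inj_onI)
  fix x y assume "x \<in> {lo..<lo+L}" "y \<in> {lo..<lo+L}" "x mod L = y mod L"
  then obtain k where k: "x - y = L * k" and "\<bar>x - y\<bar> < L"
    by (auto simp: mod_eq_dvd_iff elim: dvdE)
  then have "L * \<bar>k\<bar> < L * 1"
    using L_pos by (simp add: abs_mult)
  then have "\<bar>k\<bar> < 1"
    using L_pos by (simp only: mult_less_cancel_left_pos)
  then have "k = 0"
    by simp
  thus "x = y"
    using k by simp
qed

lemma occ_window:
  assumes "b \<in> set w"
  shows "occ {lo..<lo+L} b = 2"
proof -
  have "(\<lambda>e. e mod L) ` {e\<in>{lo..<lo+L}. letter e = b} = {r\<in>{0..<L}. letter r = b}"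
  proof
    show "(\<lambda>e. e mod L) ` {e\<in>{lo..<lo+L}. letter e = b} \<subseteq> {r\<in>{0..<L}. letter r = b}"
    proof
      fix r assume "r \<in> (\<lambda>e. e mod L) ` {e\<in>{lo..<lo+L}. letter e = b}"
      then obtain e where "r = e mod L" "letter e = b"
        by blast
      thus "r \<in> {r\<in>{0..<L}. letter r = b}"
        using L_pos letter_mod[of e] by simp
    qed
  next
    show "{r\<in>{0..<L}. letter r = b} \<subseteq> (\<lambda>e. e mod L) ` {e\<in>{lo..<lo+L}. letter e = b}"
    proof
      fix r assume r: "r \<in> {r\<in>{0..<L}. letter r = b}"
      define x where "x = lo + (r - lo) mod L"
      have "x mod L = (lo + (r - lo)) mod L"
        unfolding x_def by (rule mod_add_right_eq)
      then have "x mod L = r"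
        using r by simp
      moreover have "x \<in> {lo..<lo+L}"
        using L_pos pos_mod_sign[of L "r - lo"] pos_mod_bound[of L "r - lo"]
        unfolding x_def atLeastLessThan_iff by linarith
      moreover have "letter x = b"
        using r \<open>x mod L = r\<close> letter_mod[of x] by auto
      ultimately show "r \<in> (\<lambda>e. e mod L) ` {e\<in>{lo..<lo+L}. letter e = b}"
        by (intro image_eqI[where x = x]) auto
    qed
  qed
  moreover have inj: "inj_on (\<lambda>e. e mod L) {e\<in>{lo..<lo+L}. letter e = b}"
    by (rule inj_on_subset[OF inj_on_mod_window]) auto
  ultimately have "card {e\<in>{lo..<lo+L}. letter e = b} = card {r\<in>{0..<L}. letter r = b}"
    using card_image[OF inj] by simp
  thus ?thesis
    using card_positions_letter[OF assms] unfolding occ_def by simp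
qed

lemma positions_in_window:
  assumes "letter x = b" "letter y = b" "x \<noteq> y" "x \<in> {lo..<lo+L}" "y \<in> {lo..<lo+L}"
  shows "{e\<in>{lo..<lo+L}. letter e = b} = {x, y}"
proof -
  have "card {e\<in>{lo..<lo+L}. letter e = b} = 2"
    using occ_window[of b lo] letter_in_set[of x] assms(1) by (simp add: occ_def)
  moreover have "{x, y} \<subseteq> {e\<in>{lo..<lo+L}. letter e = b}"
    using assms by auto
  moreover have "card {x, y} = 2"
    using assms(3) by simp
  ultimately show ?thesis
    using card_subset_eq[OF finite_positions, of "{x, y}" lo "lo+L" "\<lambda>e. letter e = b"] by simp
qed

lemma occ_le_2:
  assumes "A \<subseteq> {lo..<lo+L}"
  shows "occ A b \<le> 2"
proof (cases "b \<in> set w")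
  case True
  have "card {e\<in>A. letter e = b} \<le> card {e\<in>{lo..<lo+L}. letter e = b}"
    by (rule card_mono[OF finite_positions]) (use assms in auto)
  thus ?thesis
    using occ_window[OF True] by (simp add: occ_def)
next
  case False
  then have "{e\<in>A. letter e = b} = {}"
    using letter_in_set by auto
  then have "occ A b = 0"
    unfolding occ_def by (simp only: card.empty)
  thus ?thesis
    by simp
qed

lemma no_three_positions:
  assumes "letter x = letter y" "letter y = letter z" "x \<noteq> y" "y \<noteq> z" "x \<noteq> z"
    and "x \<in> {lo..<lo+L}" "y \<in> {lo..<lo+L}" "z \<in> {lo..<lo+L}"
  shows False
proof -
  have "{e\<in>{lo..<lo+L}. letter e = letter y} = {x, y}"
    by (rule positions_in_window) (use assms in auto)
  moreover have "z \<in> {e\<in>{lo..<lo+L}. letter e = letter y}"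
    using assms by auto
  ultimately show False
    using assms by auto
qed

lemma occ_eq_card_Int:
  assumes "letter x = b" "letter y = b" "x \<noteq> y" "x \<in> {lo..<lo+L}" "y \<in> {lo..<lo+L}"
    and "A \<subseteq> {lo..<lo+L}"
  shows "occ A b = card ({x, y} \<inter> A)"
proof -
  have "{e\<in>A. letter e = b} = {e\<in>{lo..<lo+L}. letter e = b} \<inter> A"
    using assms(6) by auto
  thus ?thesis
    using positions_in_window[OF assms(1-5)] by (simp add: occ_def Int_commute)
qed

lemma occ_split:
  assumes "lo \<le> m" "m \<le> hi"
  shows "occ {lo..<hi} b = occ {lo..<m} b + occ {m..<hi} b"
proof -
  have "{e\<in>{lo..<hi}. letter e = b} = {e\<in>{lo..<m}. letter e = b} \<union> {e\<in>{m..<hi}. letter e = b}"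
    using assms by auto
  moreover have "card ({e\<in>{lo..<m}. letter e = b} \<union> {e\<in>{m..<hi}. letter e = b})
      = card {e\<in>{lo..<m}. letter e = b} + card {e\<in>{m..<hi}. letter e = b}"
    by (rule card_Un_disjoint[OF finite_positions finite_positions]) auto
  ultimately show ?thesis
    by (simp add: occ_def)
qed

lemma occ_singleton: "occ {x..<x+1} (letter x) = 1"
proof -
  have "{e\<in>{x..<x+1}. letter e = letter x} = {x}"
    by auto
  thus ?thesis
    unfolding occ_def by simp
qed

lemma occ_singleton_other:
  assumes "letter x \<noteq> b"
  shows "occ {x..<x+1} b = 0"
proof -
  have "{e\<in>{x..<x+1}. letter e = b} = {}"
    using assms by auto
  thus ?thesis
    unfolding occ_def by (metis card.empty)
qed

lemma occ_ge_1:
  assumes "x \<in> A" "finite A" "letter x = b"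
  shows "occ A b \<ge> 1"
proof -
  have "x \<in> {e\<in>A. letter e = b}" "finite {e\<in>A. letter e = b}"
    using assms by auto
  then have "card {e\<in>A. letter e = b} \<noteq> 0"
    by auto
  thus ?thesis
    by (simp add: occ_def)
qed

lemma occ_ge_2:
  assumes "x \<in> A" "y \<in> A" "x \<noteq> y" "letter x = b" "letter y = b" "finite A"
  shows "occ A b \<ge> 2"
proof -
  have "card {x, y} \<le> card {e\<in>A. letter e = b}"
    by (rule card_mono) (use assms in auto)
  thus ?thesis
    using assms(3) by (simp add: occ_def)
qed

lemma occ_posE:
  assumes "occ A b \<ge> 1"
  obtains x where "x \<in> A" "letter x = b"
proof -
  have "card {e\<in>A. letter e = b} \<noteq> 0"
    using assms by (simp add: occ_def)
  then have "{e\<in>A. letter e = b} \<noteq> {}"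
    by (metis card.empty)
  thus ?thesis
    using that by auto
qed

lemma occ_mono: "A \<subseteq> B \<Longrightarrow> finite B \<Longrightarrow> occ A b \<le> occ B b"
  unfolding occ_def by (rule card_mono) auto

lemma occ_2E:
  assumes "occ A b = 2"
  obtains x y where "x \<in> A" "y \<in> A" "x < y" "letter x = b" "letter y = b"
proof -
  obtain x y where xy: "x \<noteq> y" "{e\<in>A. letter e = b} = {x, y}"
    using assms by (auto simp: occ_def card_Suc_eq numeral_2_eq_2)
  then have "x \<in> A" "y \<in> A" "letter x = b" "letter y = b"
    by auto
  thus ?thesis
    using that[of x y] that[of y x] xy(1) by (cases "x < y") auto
qed

lemma other_occurrence:
  assumes "x \<in> {lo..<lo+L}"
  obtains y where "y \<in> {lo..<lo+L}" "y \<noteq> x" "letter y = letter x"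
proof -
  let ?P = "{e\<in>{lo..<lo+L}. letter e = letter x}"
  have "card ?P = 2"
    using occ_window[OF letter_in_set] by (simp add: occ_def)
  then obtain u v where "u \<noteq> v" "?P = {u, v}"
    by (auto simp: card_Suc_eq numeral_2_eq_2)
  moreover have "x \<in> ?P"
    using assms by simp
  ultimately obtain y where "y \<in> ?P" "y \<noteq> x"
    by blast
  then show ?thesis
    using that by blast
qed

lemma partner_exists: "\<exists>d. 0 < d \<and> d < L \<and> letter (q + d) = letter q"
proof -
  obtain y where "y \<in> {q..<q+L}" "y \<noteq> q" "letter y = letter q"
    using other_occurrence[of q q] L_pos by auto
  thus ?thesis
    by (intro exI[of _ "y - q"]) auto
qed

lemma card_eq_once_twice:
  assumes "A \<subseteq> {lo..<lo+L}" and "finite A"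
  shows "card A = card {b\<in>set w. occ A b = 1} + 2 * card {b\<in>set w. occ A b = 2}"
proof -
  have "A = (\<Union>b\<in>set w. {e\<in>A. letter e = b})"
    using letter_in_set by auto
  also have "card \<dots> = (\<Sum>b\<in>set w. card {e\<in>A. letter e = b})"
    by (rule card_UN_disjoint) (use assms(2) in auto)
  finally have "card A = (\<Sum>b\<in>set w. occ A b)"
    by (simp add: occ_def)
  thus ?thesis
    using sum_le_2_eq_card[of "set w" "occ A"] occ_le_2[OF assms(1)] by simp
qed

lemma occ_shift:
  assumes "L dvd c"
  shows "occ {lo+c..<hi+c} b = occ {lo..<hi} b"
proof -
  obtain t where t: "c = L * t"
    using assms by (auto elim: dvdE)
  have "{e\<in>{lo+c..<hi+c}. letter e = b} = (\<lambda>e. e + c) ` {e\<in>{lo..<hi}. letter e = b}"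
  proof
    show "{e\<in>{lo+c..<hi+c}. letter e = b} \<subseteq> (\<lambda>e. e + c) ` {e\<in>{lo..<hi}. letter e = b}"
    proof
      fix e assume e: "e \<in> {e\<in>{lo+c..<hi+c}. letter e = b}"
      have "letter (e - c) = b"
        using e letter_periodic[of "e - c" t] t by simp
      then have "e - c \<in> {e\<in>{lo..<hi}. letter e = b}"
        using e by auto
      thus "e \<in> (\<lambda>e. e + c) ` {e\<in>{lo..<hi}. letter e = b}"
        by (intro image_eqI[where x = "e - c"]) auto
    qed
  next
    show "(\<lambda>e. e + c) ` {e\<in>{lo..<hi}. letter e = b} \<subseteq> {e\<in>{lo+c..<hi+c}. letter e = b}"
      using letter_periodic t by auto
  qed
  moreover have inj: "inj_on (\<lambda>e. e + c) {e\<in>{lo..<hi}. letter e = b}"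
    by (rule inj_onI) simp
  ultimately show ?thesis
    unfolding occ_def using card_image[OF inj] by simp
qed

lemma interlaced_sym: "interlaced w a b \<longleftrightarrow> interlaced w b a"
  unfolding interlaced_def by blast

lemma interlacedI:
  assumes "a \<noteq> b" "0 \<le> x1" "x1 < x2" "x2 < x3" "x3 < x4" "x4 < L"
    and "letter x1 = a" "letter x2 = b" "letter x3 = a" "letter x4 = b"
  shows "interlaced w a b"
proof -
  have "nat x1 < nat x2" "nat x2 < nat x3" "nat x3 < nat x4" "nat x4 < length w"
    using assms by (auto simp: L_def)
  moreover have "w ! nat x1 = a" "w ! nat x2 = b" "w ! nat x3 = a" "w ! nat x4 = b"
    using assms letter_nth[of x1] letter_nth[of x2] letter_nth[of x3] letter_nth[of x4] by auto
  ultimately show ?thesis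
    unfolding interlaced_def using assms(1) by blast
qed

lemma interlaced_positionsE:
  assumes "interlaced w a b"
  obtains x1 x2 x3 x4 where "0 \<le> x1" "x1 < x2" "x2 < x3" "x3 < x4" "x4 < L"
    "letter x1 = a \<and> letter x2 = b \<and> letter x3 = a \<and> letter x4 = b \<or>
     letter x1 = b \<and> letter x2 = a \<and> letter x3 = b \<and> letter x4 = a"
proof -
  obtain i j k l where o: "i < j" "j < k" "k < l" "l < length w" and
      pat: "w!i = a \<and> w!j = b \<and> w!k = a \<and> w!l = b \<or> w!i = b \<and> w!j = a \<and> w!k = b \<and> w!l = a"
    using assms unfolding interlaced_def by blast
  have "letter (int i) = w!i" "letter (int j) = w!j" "letter (int k) = w!k" "letter (int l) = w!l"
    using o by (auto simp: letter_nth L_def)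
  moreover have "int l < L"
    using o by (simp add: L_def)
  ultimately show ?thesis
    using that[of "int i" "int j" "int k" "int l"] o pat by auto
qed

lemma occ_eq_1:
  assumes "letter x = b" "letter y = b" "x \<noteq> y" "x \<in> {lo..<lo+L}" "y \<in> {lo..<lo+L}"
    and "A \<subseteq> {lo..<lo+L}" "x \<in> A" "y \<notin> A"
  shows "occ A b = 1"
proof -
  have "occ A b = card ({x, y} \<inter> A)"
    by (rule occ_eq_card_Int[OF assms(1-6)])
  also have "{x, y} \<inter> A = {x}"
    using assms(7,8) by auto
  finally show ?thesis
    by simp
qed

lemma occ_between_if_interlaced:
  assumes ij: "0 \<le> i" "i < j" "j < L" and a: "letter i = a" "letter j = a"
    and "interlaced w a b"
  shows "occ {i+1..<j} b = 1"
proof -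
  have pos_a: "{e\<in>{0..<0+L}. letter e = a} = {i, j}"
    by (rule positions_in_window) (use ij a in auto)
  have sub: "{i+1..<j} \<subseteq> {0..<0+L}"
    using ij by auto
  obtain x1 x2 x3 x4 where o: "0 \<le> x1" "x1 < x2" "x2 < x3" "x3 < x4" "x4 < L" and
    pat: "letter x1 = a \<and> letter x2 = b \<and> letter x3 = a \<and> letter x4 = b \<or>
          letter x1 = b \<and> letter x2 = a \<and> letter x3 = b \<and> letter x4 = a"
    using assms(6) by (rule interlaced_positionsE)
  from pat show ?thesis
  proof
    assume p: "letter x1 = a \<and> letter x2 = b \<and> letter x3 = a \<and> letter x4 = b"
    then have "x1 \<in> {e\<in>{0..<0+L}. letter e = a}" "x3 \<in> {e\<in>{0..<0+L}. letter e = a}"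
      using o by auto
    then have "x1 \<in> {i, j}" "x3 \<in> {i, j}"
      using pos_a by blast+
    then have "x1 = i" "x3 = j"
      using o ij by auto
    then show ?thesis
      by (intro occ_eq_1[of x2 b x4 0, OF _ _ _ _ _ sub]) (use p o in auto)
  next
    assume p: "letter x1 = b \<and> letter x2 = a \<and> letter x3 = b \<and> letter x4 = a"
    then have "x2 \<in> {e\<in>{0..<0+L}. letter e = a}" "x4 \<in> {e\<in>{0..<0+L}. letter e = a}"
      using o by auto
    then have "x2 \<in> {i, j}" "x4 \<in> {i, j}"
      using pos_a by blast+
    then have "x2 = i" "x4 = j"
      using o ij by auto
    then show ?thesis
      by (intro occ_eq_1[of x3 b x1 0, OF _ _ _ _ _ sub]) (use p o in auto)
  qed
qed

lemma interlaced_if_occ_between: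
  assumes ij: "0 \<le> i" "i < j" "j < L" and a: "letter i = a" "letter j = a"
    and b: "b \<noteq> a" "occ {i+1..<j} b = 1"
  shows "interlaced w a b"
proof -
  have "occ {i+1..<j} b \<ge> 1"
    using b(2) by simp
  then obtain x where x: "x \<in> {i+1..<j}" "letter x = b"
    by (rule occ_posE)
  then have "x \<in> {0..<0+L}"
    using ij by auto
  then obtain y where y: "y \<in> {0..<0+L}" "y \<noteq> x" "letter y = b"
    using x(2) by (metis other_occurrence)
  have "y \<notin> {i+1..<j}"
    using occ_ge_2[of x "{i+1..<j}" y b] x y b(2) by auto
  moreover have "y \<noteq> i" "y \<noteq> j"
    using a b(1) y(3) by auto
  ultimately consider "y < i" | "j < y"
    by fastforce
  then show ?thesis
  proof cases
    case 1
    then have "interlaced w b a"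
      by (intro interlacedI[of b a y i x j]) (use x y ij a b in auto)
    thus ?thesis
      using interlaced_sym by blast
  next
    case 2
    thus ?thesis
      by (intro interlacedI[of a b i x j y]) (use x y ij a b in auto)
  qed
qed

lemma interlaced_iff_occ_between:
  assumes "0 \<le> i" "i < j" "j < L" "letter i = a" "letter j = a" "b \<noteq> a"
  shows "interlaced w a b \<longleftrightarrow> occ {i+1..<j} b = 1"
  using occ_between_if_interlaced[OF assms(1-5)] interlaced_if_occ_between[OF assms] by blast

text \<open>Either arc between the two occurrences may be used, so chords may wrap around the end
  of the word.\<close>

lemma interlaced_iff_occ_chord:
  assumes chord: "letter (p+d) = letter p" "0 < d" "d < L" and b: "b \<in> set w" "b \<noteq> letter p"
  shows "interlaced w (letter p) b \<longleftrightarrow> occ {p+1..<p+d} b = 1"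
proof -
  define i where "i = p mod L"
  define t where "t = p div L"
  have p: "p = i + L * t" and i: "0 \<le> i" "i < L" and letter_i: "letter i = letter p"
    using L_pos letter_mod by (auto simp: i_def t_def)
  have "letter (i + d) = letter (p + d)"
    using letter_periodic[of "i + d" t] p by (simp add: algebra_simps)
  then have letter_id: "letter (i + d) = letter p"
    using chord(1) by simp
  have shift: "occ {p+1..<p+d} b = occ {i+1..<i+d} b"
    using occ_shift[of "L*t" "i+1" "i+d" b] p by (simp add: algebra_simps)
  show ?thesis
  proof (cases "i + d < L")
    case True
    show ?thesis
      unfolding shift by (rule interlaced_iff_occ_between) (use i True chord letter_i letter_id b in auto)
  next
    case False
    define j where "j = i + d - L"
    have j: "0 \<le> j" "j < i" "j + L = i + d"
      using False chord i by (auto simp: j_def)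
    have letter_j: "letter j = letter p"
      using letter_add_L[of j] letter_id by (simp add: j_def)
    have inter: "interlaced w (letter p) b \<longleftrightarrow> occ {j+1..<i} b = 1"
      by (rule interlaced_iff_occ_between) (use j i letter_j letter_i b in auto)
    have "occ {j..<j+L} b = occ {j..<j+1} b + occ {j+1..<j+L} b"
      by (rule occ_split) (use j L_pos in auto)
    also have "occ {j+1..<j+L} b = occ {j+1..<i} b + occ {i..<j+L} b"
      by (rule occ_split) (use j chord(2) in auto)
    also have "occ {i..<j+L} b = occ {i..<i+1} b + occ {i+1..<i+d} b"
      using occ_split[of i "i+1" "i+d" b] j chord(2) by simp
    finally have split: "occ {j..<j+L} b = occ {j..<j+1} b + (occ {j+1..<i} b + (occ {i..<i+1} b + occ {i+1..<i+d} b))" .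
    moreover have "occ {j..<j+L} b = 2"
      by (rule occ_window[OF b(1)])
    moreover have "occ {j..<j+1} b = 0" "occ {i..<i+1} b = 0"
      by (rule occ_singleton_other, use letter_j letter_i b(2) in simp)+
    ultimately have "occ {j+1..<i} b + occ {i+1..<i+d} b = 2"
      using split by simp
    thus ?thesis
      unfolding shift inter by auto
  qed
qed

lemma occ_chord_self:
  assumes "letter (p+d) = letter p" "0 < d" "d < L"
  shows "occ {p+1..<p+d} (letter p) = 0"
proof -
  have "{e\<in>{p..<p+L}. letter e = letter p} = {p, p+d}"
    by (rule positions_in_window) (use assms L_pos in auto)
  moreover have "{e\<in>{p+1..<p+d}. letter e = letter p} \<subseteq> {e\<in>{p..<p+L}. letter e = letter p}"
    using assms(3) by auto
  ultimately have "{e\<in>{p+1..<p+d}. letter e = letter p} \<subseteq> {p, p+d}"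
    by simp
  moreover have "{e\<in>{p+1..<p+d}. letter e = letter p} \<inter> {p, p+d} = {}"
    by auto
  ultimately have "{e\<in>{p+1..<p+d}. letter e = letter p} = {}"
    by blast
  thus ?thesis
    unfolding occ_def by (metis card.empty)
qed

lemma not_interlaced_across:
  assumes "hi - lo \<le> L" "occ {lo..<hi} x = 0" "occ {lo..<hi} y = 2" "x \<in> set w"
  shows "\<not> interlaced w y x"
proof
  assume "interlaced w y x"
  obtain x1 x2 where xy: "x1 \<in> {lo..<hi}" "x2 \<in> {lo..<hi}" "x1 < x2" "letter x1 = y" "letter x2 = y"
    by (rule occ_2E[OF assms(3)])
  have chord: "letter (x1 + (x2 - x1)) = letter x1" "0 < x2 - x1" "x2 - x1 < L"
    using xy assms(1) by auto
  have "x \<noteq> letter x1"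
    using assms(2,3) xy by auto
  then have "occ {x1+1..<x1+(x2-x1)} x = 1"
    using interlaced_iff_occ_chord[OF chord assms(4)] \<open>interlaced w y x\<close> xy by simp
  moreover have "occ {x1+1..<x1+(x2-x1)} x \<le> occ {lo..<hi} x"
    by (rule occ_mono) (use xy in auto)
  ultimately show False
    using assms(2) by simp
qed

lemma interlaced_if_crossing:
  assumes "letter i = a" "letter j = a" "letter x = b" "letter y = b"
    and "i < x" "x < j" "j < y" "y < i + L"
  shows "interlaced w a b"
proof -
  have chord: "letter (i + (j - i)) = letter i" "0 < j - i" "j - i < L"
    using assms by auto
  have b: "b \<in> set w" "b \<noteq> letter i"
    using no_three_positions[of i j x i] letter_in_set[of x] assms by auto
  have "occ {i+1..<i+(j-i)} b = 1"
    by (rule occ_eq_1[of x _ y i]) (use assms in auto)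
  then have "interlaced w (letter i) b"
    using interlaced_iff_occ_chord[OF chord b] by simp
  thus ?thesis
    using assms(1) by simp
qed

end

section \<open>Chords of cubic 3-connected interlacement graphs\<close>

locale cubic_word = cyclic_word +
  assumes cubic: "regular 3 (set w) (interlaced w)"
    and three_connected: "k_connected 3 (set w) (interlaced w)"
    and card_gt_4: "4 < card (set w)"
begin

lemma card_interlaced: "a \<in> set w \<Longrightarrow> card {b\<in>set w. interlaced w a b} = 3"
  using cubic by (simp add: regular_def degree_def)

lemma L_ge_10: "L \<ge> 10"
  using length_double_occurrence_word[OF dow] card_gt_4 by (simp add: L_def)

text \<open>This is where 3-connectivity enters: the letters occurring once on the arc separate
  those occurring twice from those not occurring on it.\<close>

lemma card_once_in_arc_ge_3:
  assumes "hi - lo \<le> L" and b0: "b0 \<in> set w" "occ {lo..<hi} b0 = 0"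
    and b2: "b2 \<in> set w" "occ {lo..<hi} b2 = 2"
  shows "card {b\<in>set w. occ {lo..<hi} b = 1} \<ge> 3"
proof (rule ccontr)
  define X where "X = {b\<in>set w. occ {lo..<hi} b = 1}"
  assume "\<not> card {b\<in>set w. occ {lo..<hi} b = 1} \<ge> 3"
  then have "connected_on (interlaced w) (set w - X)"
    using three_connected by (simp add: k_connected_def X_def)
  moreover have "b0 \<in> set w - X" "b2 \<in> set w - X"
    using b0 b2 by (auto simp: X_def)
  ultimately have path: "(\<lambda>u v. u \<in> set w - X \<and> v \<in> set w - X \<and> interlaced w u v)\<^sup>*\<^sup>* b0 b2"
    unfolding connected_on_def by blast
  have "occ {lo..<hi} v = 0"
    if "(\<lambda>u v. u \<in> set w - X \<and> v \<in> set w - X \<and> interlaced w u v)\<^sup>*\<^sup>* b0 v" for v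
    using that
  proof (induction rule: rtranclp_induct)
    case (step u v)
    then have uv: "u \<in> set w" "v \<in> set w - X" "interlaced w v u"
      using interlaced_sym by auto
    have "occ {lo..<hi} v \<noteq> 2"
      using not_interlaced_across[OF assms(1) step.IH _ uv(1)] uv(3) by blast
    moreover have "occ {lo..<hi} v \<le> 2"
      by (rule occ_le_2[where lo = lo]) (use assms(1) in auto)
    ultimately show ?case
      using uv(2) by (auto simp: X_def)
  qed (use b0 in simp)
  from this[OF path] show False
    using b2 by simp
qed

lemma once_in_chord_eq_interlaced:
  assumes "letter (p+d) = letter p" "0 < d" "d < L"
  shows "{b\<in>set w. occ {p+1..<p+d} b = 1} = {b\<in>set w. interlaced w (letter p) b}"
proof -
  have "occ {p+1..<p+d} (letter p) = 0"
    by (rule occ_chord_self[OF assms])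
  moreover have "\<not> interlaced w (letter p) (letter p)"
    unfolding interlaced_def by simp
  ultimately show ?thesis
    using interlaced_iff_occ_chord[OF assms] by force
qed

lemma card_once_in_chord:
  assumes "letter (p+d) = letter p" "0 < d" "d < L"
  shows "card {b\<in>set w. occ {p+1..<p+d} b = 1} = 3"
  unfolding once_in_chord_eq_interlaced[OF assms] using card_interlaced letter_in_set by blast

lemma chord_length:
  assumes "letter (p+d) = letter p" "0 < d" "d < L"
  shows "d = 4 + 2 * int (card {b\<in>set w. occ {p+1..<p+d} b = 2})"
proof -
  have "card {p+1..<p+d} = card {b\<in>set w. occ {p+1..<p+d} b = 1} + 2 * card {b\<in>set w. occ {p+1..<p+d} b = 2}"
    by (rule card_eq_once_twice[of _ "p+1"]) (use assms in auto)
  thus ?thesis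
    using card_once_in_chord[OF assms] assms(2) by simp
qed

lemma chord_length_4:
  assumes "letter (p+d) = letter p" "0 < d" "d < L" and "\<forall>b\<in>set w. occ {p+1..<p+d} b \<noteq> 2"
  shows "d = 4"
proof -
  have "{b\<in>set w. occ {p+1..<p+d} b = 2} = {}"
    using assms(4) by auto
  then have "card {b\<in>set w. occ {p+1..<p+d} b = 2} = 0"
    by (simp only: card.empty)
  with chord_length[OF assms(1-3)] show ?thesis
    by (simp only: of_nat_0 mult_zero_right add_0_right)
qed

text \<open>A letter occurring twice inside would, by card_once_in_arc_ge_3 on the arc after the
  first inner position, require three crossers other than the first inner letter.\<close>

lemma chord_length_4_if_first_crosses:
  assumes chord: "letter (p+d) = letter p" "0 < d" "d < L"
    and first: "occ {p+1..<p+d} (letter (p+1)) = 1"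
  shows "d = 4"
proof (rule chord_length_4[OF chord], rule ccontr)
  assume "\<not> (\<forall>b\<in>set w. occ {p+1..<p+d} b \<noteq> 2)"
  then obtain b where b: "b \<in> set w" "occ {p+1..<p+d} b = 2"
    by auto
  have "d \<ge> 2"
  proof (rule ccontr)
    assume "\<not> d \<ge> 2"
    then have "{p+1..<p+d} = {}"
      by auto
    thus False
      using first by (simp add: occ_def)
  qed
  then have split: "occ {p+1..<p+d} x = occ {p+1..<p+2} x + occ {p+2..<p+d} x" for x
    by (intro occ_split) auto
  have first_letter: "occ {p+1..<p+2} x = (if x = letter (p+1) then 1 else 0)" for x
    using occ_singleton[of "p+1"] occ_singleton_other[of "p+1" x] by (simp add: add.assoc)
  have "b \<noteq> letter (p+1)"
    using b first by auto
  then have "occ {p+2..<p+d} b = 2"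
    using split[of b] first_letter[of b] b by simp
  moreover have "occ {p+2..<p+d} (letter p) = 0"
    using occ_mono[of "{p+2..<p+d}" "{p+1..<p+d}" "letter p"] occ_chord_self[OF chord] by simp
  ultimately have "card {x\<in>set w. occ {p+2..<p+d} x = 1} \<ge> 3"
    using card_once_in_arc_ge_3[of "p+d" "p+2"] chord b letter_in_set by auto
  moreover have "{x\<in>set w. occ {p+2..<p+d} x = 1} \<subseteq> {x\<in>set w. occ {p+1..<p+d} x = 1} - {letter (p+1)}"
  proof
    fix x assume x: "x \<in> {x\<in>set w. occ {p+2..<p+d} x = 1}"
    then have "x \<noteq> letter (p+1)"
      using split[of "letter (p+1)"] first_letter[of "letter (p+1)"] first by auto
    thus "x \<in> {x\<in>set w. occ {p+1..<p+d} x = 1} - {letter (p+1)}"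
      using x split[of x] first_letter[of x] by simp
  qed
  moreover have "card ({x\<in>set w. occ {p+1..<p+d} x = 1} - {letter (p+1)}) = 2"
    using card_once_in_chord[OF chord] first letter_in_set[of "p+1"] by simp
  ultimately show False
    using card_mono[of "{x\<in>set w. occ {p+1..<p+d} x = 1} - {letter (p+1)}"
        "{x\<in>set w. occ {p+2..<p+d} x = 1}"] by simp
qed

lemma chord4_next:
  assumes "letter (p+4) = letter p"
  shows "letter (p+3) = letter (p+7)"
proof -
  have chord: "letter (p+4) = letter p" "(0::int) < 4" "4 < L"
    using assms L_ge_10 by auto
  define r where "r = letter (p+3)"
  have r: "r \<in> set w"
    by (simp add: r_def letter_in_set)
  have "\<forall>b\<in>set w. occ {p+1..<p+4} b \<noteq> 2"
    using chord_length[OF chord] by auto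
  moreover have "occ {p+1..<p+4} r \<ge> 1"
    by (rule occ_ge_1[of "p+3"]) (auto simp: r_def)
  moreover have "occ {p+1..<p+4} r \<le> 2"
    by (rule occ_le_2[of _ "p+1"]) (use L_ge_10 in auto)
  ultimately have once: "occ {p+1..<p+4} r = 1"
    using r by fastforce
  have ne: "r \<noteq> letter p"
    using once occ_chord_self[OF chord] by auto
  have "interlaced w (letter p) r"
    using interlaced_iff_occ_chord[OF chord r ne] once by simp
  then have crosses: "interlaced w r (letter p)"
    using interlaced_sym by blast
  obtain d where d: "letter ((p+3) + d) = letter (p+3)" "0 < d" "d < L"
    using partner_exists by blast
  have "occ {(p+3)+1..<(p+3)+d} (letter p) = 1"
    using interlaced_iff_occ_chord[OF d letter_in_set] crosses ne by (simp add: r_def)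
  moreover have "letter ((p+3)+1) = letter p"
    using assms by (simp add: add.assoc)
  ultimately have "occ {(p+3)+1..<(p+3)+d} (letter ((p+3)+1)) = 1"
    by (simp only:)
  then have "d = 4"
    by (rule chord_length_4_if_first_crosses[OF d])
  thus ?thesis
    using d by (simp add: add.assoc)
qed

text \<open>A shortest chord encloses no letter twice, hence has length 4.\<close>

lemma chord4_exists: "\<exists>k. letter (k+4) = letter k"
proof -
  define P where "P d \<longleftrightarrow> (\<exists>p. 0 < int d \<and> int d < L \<and> letter (p + int d) = letter p)" for d
  obtain d1 where "0 < d1" "d1 < L" "letter (0 + d1) = letter 0"
    using partner_exists by blast
  then have "P (nat d1)"
    unfolding P_def by (intro exI[of _ 0]) auto
  then have "P (Least P)"
    by (rule LeastI)
  then obtain p where p: "0 < int (Least P)" "int (Least P) < L" "letter (p + int (Least P)) = letter p"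
    unfolding P_def by blast
  have "\<forall>b\<in>set w. occ {p+1..<p+int (Least P)} b \<noteq> 2"
  proof (intro ballI notI)
    fix b assume "occ {p+1..<p+int (Least P)} b = 2"
    then obtain x y where xy: "x \<in> {p+1..<p+int (Least P)}" "y \<in> {p+1..<p+int (Least P)}"
        "x < y" "letter x = b" "letter y = b"
      by (rule occ_2E)
    have "P (nat (y - x))"
      unfolding P_def using p xy by (intro exI[of _ x]) auto
    then have "Least P \<le> nat (y - x)"
      by (rule Least_le)
    thus False
      using xy by auto
  qed
  then have "int (Least P) = 4"
    by (rule chord_length_4[OF p(3,1,2)])
  thus ?thesis
    using p by auto
qed

lemma chord4_family:
  assumes "letter (k+4) = letter k"
  shows "letter (k + 3 * m + 4) = letter (k + 3 * m)"
proof -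
  have nat_case: "letter (k + 3 * int n + 4) = letter (k + 3 * int n)" for n
  proof (induction n)
    case (Suc n)
    then have "letter (k + 3 * int n + 3) = letter (k + 3 * int n + 7)"
      using chord4_next[of "k + 3 * int n"] by (simp add: add.assoc)
    thus ?case
      by (simp add: algebra_simps)
  qed (use assms in simp)
  define m' where "m' = m mod L"
  have "m' \<ge> 0" and m: "m = m' + L * (m div L)"
    using L_pos by (simp_all add: m'_def)
  have "letter (k + 3 * m + 4) = letter (k + 3 * m' + 4)"
    using letter_periodic[of "k + 3 * m' + 4" "3 * (m div L)"] by (subst m) (simp add: algebra_simps)
  moreover have "letter (k + 3 * m) = letter (k + 3 * m')"
    using letter_periodic[of "k + 3 * m'" "3 * (m div L)"] by (subst m) (simp add: algebra_simps)
  ultimately show ?thesis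
    using nat_case[of "nat m'"] \<open>m' \<ge> 0\<close> by simp
qed

lemma mod_L_neq:
  assumes "0 < \<bar>x - y\<bar>" "\<bar>x - y\<bar> < L"
  shows "x mod L \<noteq> y mod L"
proof
  assume "x mod L = y mod L"
  then have "L dvd (x - y)"
    by (simp add: mod_eq_dvd_iff)
  then obtain c where c: "x - y = L * c"
    by (auto elim: dvdE)
  then have "c \<noteq> 0"
    using assms by auto
  then have "L \<le> L * \<bar>c\<bar>"
    using L_pos by simp
  moreover have "\<bar>x - y\<bar> = L * \<bar>c\<bar>"
    using c L_pos by (simp add: abs_mult)
  ultimately show False
    using assms(2) by linarith
qed

lemma no_three_positions_mod:
  assumes "letter x = letter y" "letter y = letter z"
    and "x mod L \<noteq> y mod L" "y mod L \<noteq> z mod L" "x mod L \<noteq> z mod L"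
  shows False
proof -
  have "letter (x mod L) = letter (y mod L)" "letter (y mod L) = letter (z mod L)"
    using assms letter_mod by auto
  thus False
    by (rule no_three_positions[of _ _ _ 0]) (use assms L_pos in auto)
qed

lemma no_three_positions_close:
  assumes "letter x = letter y" "letter y = letter z"
    and "0 < \<bar>x - y\<bar>" "\<bar>x - y\<bar> < L" "0 < \<bar>y - z\<bar>" "\<bar>y - z\<bar> < L" "0 < \<bar>x - z\<bar>" "\<bar>x - z\<bar> < L"
  shows False
  using no_three_positions_mod[OF assms(1,2)] mod_L_neq assms by metis

end

section \<open>Residues modulo 3\<close>

locale cubic_word_chord4 = cubic_word +
  fixes k :: int
  assumes chord4: "letter (k+4) = letter k"
begin

lemma class0_chord:
  assumes "(x - k) mod 3 = 0"
  shows "letter (x+4) = letter x"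
proof -
  have "x = k + 3 * ((x - k) div 3)"
    using assms by presburger
  thus ?thesis
    using chord4_family[OF chord4, of "(x - k) div 3"] by simp
qed

lemma class1_chord:
  assumes "(x - k) mod 3 = 1"
  shows "letter (x-4) = letter x"
proof -
  have "x = k + 3 * ((x - k) div 3 - 1) + 4"
    using assms by presburger
  thus ?thesis
    using chord4_family[OF chord4, of "(x - k) div 3 - 1"] by (metis add_diff_cancel_right')
qed

text \<open>Otherwise k + 4 and k + 8 are congruent modulo L to positions k + 3m and k + 3m + 4, so
  k, k + 4 and k + 8 would carry the same letter.\<close>

lemma three_dvd_L: "3 dvd L"
proof (rule ccontr)
  assume "\<not> 3 dvd L"
  then have "3 dvd (4 - L * 1) \<or> 3 dvd (4 - L * 2)"
    by presburger
  then obtain c where "3 dvd (4 - L * c)"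
    by blast
  then obtain m where m: "4 - L * c = 3 * m"
    by (auto elim: dvdE)
  have "letter (k + 4) = letter (k + 3 * m)"
    using letter_periodic[of "k + 3 * m" c] m by (simp add: algebra_simps)
  moreover have "k + 8 = k + 3 * m + 4 + L * c"
    using m by simp
  then have "letter (k + 8) = letter (k + 3 * m + 4)"
    by (metis letter_periodic)
  ultimately have "letter k = letter (k+4)" "letter (k+4) = letter (k+8)"
    using chord4 chord4_family[OF chord4, of m] by simp_all
  thus False
    using no_three_positions_close[of k "k+4" "k+8"] L_ge_10 by auto
qed

lemma mod_L_neq_if_mod_3_neq:
  assumes "(x - y) mod 3 \<noteq> 0"
  shows "x mod L \<noteq> y mod L"
proof
  assume "x mod L = y mod L"
  then have "L dvd (x - y)"
    by (simp add: mod_eq_dvd_iff)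
  then have "3 dvd (x - y)"
    using three_dvd_L by (rule dvd_trans[rotated])
  thus False
    using assms by simp
qed

text \<open>Residue 0 and residue 1 positions (relative to k) are paired with each other
  four apart, so a letter at a residue 2 position occurs only at residue 2 positions.\<close>

lemma class2_closed:
  assumes "letter s = letter t" and s: "(s - k) mod 3 = 2"
  shows "(t - k) mod 3 = 2"
proof (rule ccontr)
  assume t: "(t - k) mod 3 \<noteq> 2"
  obtain t' where t': "letter t' = letter t" "(t' - k) mod 3 \<noteq> 2" "(t - t') mod 3 \<noteq> 0"
  proof (cases "(t - k) mod 3 = 0")
    case True
    show ?thesis
      by (rule that[of "t+4"]) (use True class0_chord[OF True] in presburger)+
  next
    case False
    then have "(t - k) mod 3 = 1"
      using t by presburger
    show ?thesis
      by (rule that[of "t-4"]) (use \<open>(t - k) mod 3 = 1\<close> class1_chord[OF \<open>(t - k) mod 3 = 1\<close>] in presburger)+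
  qed
  have "(s - t) mod 3 \<noteq> 0" "(s - t') mod 3 \<noteq> 0"
    using s t t'(2) by presburger+
  thus False
    using no_three_positions_mod[of s t t'] assms(1) t'(1,3) mod_L_neq_if_mod_3_neq by metis
qed

lemma class2_chord_length:
  assumes "(s - k) mod 3 = 2" and chord: "letter (s+e) = letter s" "0 < e" "e < L"
  shows "e mod 3 = 0" "6 \<le> e" "e \<le> L - 3"
proof -
  have "(s + e - k) mod 3 = 2"
    using class2_closed[of s "s+e"] chord assms(1) by simp
  then show e3: "e mod 3 = 0"
    using assms(1) by presburger
  show "e \<le> L - 3"
    using e3 three_dvd_L chord(3) by presburger
  have "e = 4 + 2 * int (card {b\<in>set w. occ {s+1..<s+e} b = 2})"
    by (rule chord_length[OF chord])
  then show "6 \<le> e"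
    using e3 chord(2) by presburger
qed

text \<open>On a chord from a residue 2 position, the letters at the second and the second-to-last
  inner positions are crossers of residue 0 or 1; so at most one crosser has residue 2.\<close>

lemma class2_chord_crossers:
  assumes s: "(s - k) mod 3 = 2" and chord: "letter (s+e) = letter s" "0 < e" "e < L"
    and u: "(u - k) mod 3 = 2" "occ {s+1..<s+e} (letter u) = 1"
    and v: "(v - k) mod 3 = 2" "occ {s+1..<s+e} (letter v) = 1"
  shows "letter u = letter v"
proof (rule ccontr)
  assume uv: "letter u \<noteq> letter v"
  define A where "A = {s+1..<s+e}"
  have e: "6 \<le> e" "e \<le> L - 3"
    using class2_chord_length[OF s chord] by simp_all
  have "(s + 2 - k) mod 3 = 1" and "(s + e - 2 - k) mod 3 = 0"
    using s class2_chord_length(1)[OF s chord] by presburger+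
  note c1 = this(1) and c0 = this(2)
  have o1: "occ A (letter (s+2)) = 1"
    by (rule occ_eq_1[of "s+2" _ "s+2-4" "s-2"]) (use e class1_chord[OF c1] in \<open>auto simp: A_def\<close>)
  have o2: "occ A (letter (s+e-2)) = 1"
    by (rule occ_eq_1[of "s+e-2" _ "s+e-2+4" "s+1"]) (use e class0_chord[OF c0] in \<open>auto simp: A_def\<close>)
  have "letter (s+2) \<noteq> letter (s+e-2)"
  proof
    assume "letter (s+2) = letter (s+e-2)"
    then have "occ A (letter (s+2)) \<ge> 2"
      by (intro occ_ge_2[of "s+2" _ "s+e-2"]) (use e in \<open>auto simp: A_def\<close>)
    thus False
      using o1 by simp
  qed
  moreover have "letter u \<noteq> letter (s+2)" "letter u \<noteq> letter (s+e-2)"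
    "letter v \<noteq> letter (s+2)" "letter v \<noteq> letter (s+e-2)"
    using class2_closed[of u "s+2"] class2_closed[of u "s+e-2"]
      class2_closed[of v "s+2"] class2_closed[of v "s+e-2"] u(1) v(1) c1 c0 by auto
  ultimately have "distinct [letter (s+2), letter (s+e-2), letter u, letter v]"
    using uv by auto
  moreover have "{letter (s+2), letter (s+e-2), letter u, letter v} \<subseteq> {b\<in>set w. occ A b = 1}"
    using o1 o2 u(2) v(2) letter_in_set by (auto simp: A_def)
  ultimately show False
    using card3_no_four_distinct card_once_in_chord[OF chord] by (metis A_def)
qed

text \<open>For longer chords, the residue 2 positions p+3 and p+6 inside would carry two distinct
  crossers.\<close>

lemma shortest_class2_chord:
  assumes p: "(p - k) mod 3 = 2" and chord: "letter (p+D) = letter p" "0 < D" "D < L"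
    and shortest: "\<And>q d. (q - k) mod 3 = 2 \<Longrightarrow> 0 < d \<Longrightarrow> d < D \<Longrightarrow> letter (q+d) \<noteq> letter q"
  shows "D = 6"
proof (rule ccontr)
  define A where "A = {p+1..<p+D}"
  assume "D \<noteq> 6"
  then have "9 \<le> D"
    using class2_chord_length[OF p chord] by presburger
  have once: "occ A (letter z) = 1" if z: "(z - k) mod 3 = 2" "z \<in> A" for z
  proof -
    have "occ A (letter z) \<ge> 1"
      by (rule occ_ge_1[OF z(2)]) (simp_all add: A_def)
    moreover have "occ A (letter z) \<le> 2"
      by (rule occ_le_2[where lo = "p+1"]) (use chord in \<open>auto simp: A_def\<close>)
    moreover have "occ A (letter z) \<noteq> 2"
    proof
      assume "occ A (letter z) = 2"
      then obtain x y where xy: "x \<in> A" "y \<in> A" "x < y" "letter x = letter z" "letter y = letter z"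
        by (rule occ_2E)
      moreover have "(x - k) mod 3 = 2"
        using class2_closed[of z x] xy z by simp
      ultimately show False
        using shortest[of x "y - x"] by (auto simp: A_def)
    qed
    ultimately show ?thesis
      by simp
  qed
  have p3: "(p + 3 - k) mod 3 = 2" "(p + 6 - k) mod 3 = 2"
    using p by presburger+
  have o3: "occ A (letter (p+3)) = 1" and o6: "occ A (letter (p+6)) = 1"
    using once[of "p+3"] once[of "p+6"] p3 \<open>9 \<le> D\<close> by (simp_all add: A_def)
  have "letter (p+3) = letter (p+6)"
    by (rule class2_chord_crossers[OF p chord p3(1) _ p3(2)]) (use o3 o6 in \<open>simp_all add: A_def\<close>)
  then have "occ A (letter (p+3)) \<ge> 2"
    by (intro occ_ge_2[of "p+3" _ "p+6"]) (use \<open>9 \<le> D\<close> in \<open>auto simp: A_def\<close>)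
  thus False
    using o3 by simp
qed

lemma class2_chord6_exists: "\<exists>p. (p - k) mod 3 = 2 \<and> letter (p+6) = letter p"
proof -
  define P where "P d \<longleftrightarrow> (\<exists>p. (p - k) mod 3 = 2 \<and> 0 < int d \<and> int d < L \<and> letter (p + int d) = letter p)"
    for d
  obtain d1 where "0 < d1" "d1 < L" "letter ((k+2) + d1) = letter (k+2)"
    using partner_exists by blast
  then have "P (nat d1)"
    unfolding P_def by (intro exI[of _ "k+2"]) auto
  then have "P (Least P)"
    by (rule LeastI)
  then obtain p where p: "(p - k) mod 3 = 2"
    and chord: "letter (p + int (Least P)) = letter p" "0 < int (Least P)" "int (Least P) < L"
    unfolding P_def by blast
  have "int (Least P) = 6"
  proof (rule shortest_class2_chord[OF p chord])
    fix q d assume "(q - k) mod 3 = 2" "0 < d" "d < int (Least P)"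
    then show "letter (q + d) \<noteq> letter q"
      using not_less_Least[of "nat d" P] chord(3) unfolding P_def by auto
  qed
  thus ?thesis
    using p chord by auto
qed

text \<open>On an arc between two residue 2 positions, a residue 0 letter occurs twice unless it sits
  at the second-to-last position, and a residue 1 letter unless it sits at the second position.\<close>

lemma once_in_class2_arc:
  assumes lo: "(lo - k) mod 3 = 2" and hi: "(hi - k) mod 3 = 2"
    and twice: "\<And>x. x \<in> {lo..<hi+1} \<Longrightarrow> (x - k) mod 3 = 2 \<Longrightarrow> occ {lo..<hi+1} (letter x) = 2"
  shows "{c\<in>set w. occ {lo..<hi+1} c = 1} \<subseteq> {letter (lo+2), letter (hi-2)}"
proof
  define A where "A = {lo..<hi+1}"
  fix c assume c: "c \<in> {c\<in>set w. occ {lo..<hi+1} c = 1}"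
  then have "occ A c \<ge> 1"
    by (simp add: A_def)
  then obtain x where x: "x \<in> A" "letter x = c"
    by (rule occ_posE)
  have twice_if: "occ A c \<ge> 2" if "y \<in> A" "y \<noteq> x" "letter y = c" for y
    by (rule occ_ge_2[of x _ y]) (use x that in \<open>auto simp: A_def\<close>)
  have "(x - k) mod 3 = 2 \<or> (x - k) mod 3 = 0 \<or> (x - k) mod 3 = 1"
    by presburger
  then consider "(x - k) mod 3 = 2" | "(x - k) mod 3 = 0" | "(x - k) mod 3 = 1"
    by blast
  then show "c \<in> {letter (lo+2), letter (hi-2)}"
  proof cases
    case 1
    then show ?thesis
      using twice[of x] x c by (simp add: A_def)
  next
    case 2
    then have "x + 4 \<notin> A"
      using twice_if[of "x+4"] class0_chord[OF 2] x c by (auto simp: A_def)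
    then have "x = hi - 2"
      using 2 hi x(1) unfolding A_def atLeastLessThan_iff by presburger
    thus ?thesis
      using x by simp
  next
    case 3
    then have "x - 4 \<notin> A"
      using twice_if[of "x-4"] class1_chord[OF 3] x c by (auto simp: A_def)
    then have "x = lo + 2"
      using 3 lo x(1) unfolding A_def atLeastLessThan_iff by presburger
    thus ?thesis
      using x by simp
  qed
qed

text \<open>So such an arc is crossed by at most two letters, and by 3-connectivity it cannot
  miss a letter.\<close>

lemma class2_arc_covers:
  assumes lo: "(lo - k) mod 3 = 2" and hi: "(hi - k) mod 3 = 2" "lo < hi" "hi - lo < L"
    and twice: "\<And>x. x \<in> {lo..<hi+1} \<Longrightarrow> (x - k) mod 3 = 2 \<Longrightarrow> occ {lo..<hi+1} (letter x) = 2"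
    and "b \<in> set w"
  shows "occ {lo..<hi+1} b \<noteq> 0"
proof
  assume "occ {lo..<hi+1} b = 0"
  then have "card {c\<in>set w. occ {lo..<hi+1} c = 1} \<ge> 3"
    by (intro card_once_in_arc_ge_3[of _ _ b "letter lo"]) (use hi twice lo \<open>b \<in> set w\<close> letter_in_set in auto)
  moreover have "card {c\<in>set w. occ {lo..<hi+1} c = 1} \<le> card {letter (lo+2), letter (hi-2)}"
    by (rule card_mono[OF _ once_in_class2_arc[OF lo hi(1) twice]]) simp
  moreover have "card {letter (lo+2), letter (hi-2)} \<le> 2"
    by (rule card_insert_le_m1) auto
  ultimately show False
    by simp
qed

end

section \<open>The shortest residue 2 chord and the word of K_{3,3}\<close>

locale cubic_word_chord6 = cubic_word_chord4 +
  fixes p :: int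
  assumes p_class: "(p - k) mod 3 = 2" and chord6: "letter (p+6) = letter p"
begin

lemma p3_class: "(p + 3 - k) mod 3 = 2"
  using p_class by presburger

lemma letter_p3_neq: "letter (p+3) \<noteq> letter p"
  using no_three_positions_close[of p "p+3" "p+6"] chord6 L_ge_10 by auto

lemma partner_p3_exists:
  obtains t where "letter (p+t) = letter (p+3)" "9 \<le> t" "t \<le> L - 3" "t mod 3 = 0"
proof -
  obtain d where d: "letter ((p+3) + d) = letter (p+3)" "0 < d" "d < L"
    using partner_exists by blast
  note len = class2_chord_length[OF p3_class d]
  have "d \<noteq> L - 3"
  proof
    assume "d = L - 3"
    then have "letter (p+3) = letter (p+L)"
      using d(1) by simp
    thus False
      using letter_add_L[of p] letter_p3_neq by simp
  qed
  then have "d \<le> L - 6"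
    using len three_dvd_L by presburger
  thus ?thesis
    using that[of "3 + d"] d(1) len by (simp add: algebra_simps)
qed

context
  fixes t :: int
  assumes t: "letter (p+t) = letter (p+3)" "9 \<le> t" "t \<le> L - 3" "t mod 3 = 0"
begin

text \<open>A residue 2 letter strictly inside the chord from p+3 to p+t cannot
  cross it: letter p already does.\<close>

lemma inner_class2_twice:
  assumes y: "(y - k) mod 3 = 2" "p+6 < y" "y < p+t"
  shows "occ {p+4..<p+t} (letter y) = 2"
proof -
  have chord: "letter ((p+3) + (t-3)) = letter (p+3)" "0 < t - 3" "t - 3 < L"
    using t by auto
  have "occ {p+4..<p+t} (letter y) \<ge> 1"
    by (rule occ_ge_1) (use y in auto)
  moreover have "occ {p+4..<p+t} (letter y) \<le> 2"
    by (rule occ_le_2[where lo = "p+4"]) (use t in auto)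
  moreover have "occ {p+4..<p+t} (letter y) \<noteq> 1"
  proof
    assume "occ {p+4..<p+t} (letter y) = 1"
    moreover have "occ {p+4..<p+t} (letter p) = 1"
      by (rule occ_eq_1[of "p+6" _ p p]) (use chord6 t in auto)
    moreover have "{(p+3)+1..<(p+3)+(t-3)} = {p+4..<p+t}"
      by auto
    ultimately have "letter y = letter p"
      using class2_chord_crossers[OF p3_class chord y(1) _ p_class] by simp
    thus False
      using no_three_positions_close[of p "p+6" y] chord6 y t by auto
  qed
  ultimately show ?thesis
    by simp
qed

lemma arc_p_covers:
  assumes "b \<in> set w"
  shows "occ {p..<p+t+1} b \<noteq> 0"
proof (rule class2_arc_covers[OF p_class _ _ _ _ assms])
  show "(p + t - k) mod 3 = 2"
    using p_class t(4) by presburger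
  show "p < p + t" "p + t - p < L"
    using t by auto
  fix x assume x: "x \<in> {p..<p+t+1}" "(x - k) mod 3 = 2"
  have le2: "occ {p..<p+t+1} (letter x) \<le> 2"
    by (rule occ_le_2[where lo = p]) (use t in auto)
  have "x \<in> {p, p+3, p+6, p+t} \<or> p+6 < x \<and> x < p+t"
    using x p_class t(4) by auto presburger
  then have "occ {p..<p+t+1} (letter x) \<ge> 2"
  proof
    assume "x \<in> {p, p+3, p+6, p+t}"
    then show ?thesis
      using occ_ge_2[of p "{p..<p+t+1}" "p+6"] occ_ge_2[of "p+3" "{p..<p+t+1}" "p+t"]
        chord6 t by auto
  next
    assume "p+6 < x \<and> x < p+t"
    then have "occ {p+4..<p+t} (letter x) = 2"
      using inner_class2_twice x(2) by blast
    moreover have "occ {p+4..<p+t} (letter x) \<le> occ {p..<p+t+1} (letter x)"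
      by (rule occ_mono) auto
    ultimately show ?thesis
      by simp
  qed
  with le2 show "occ {p..<p+t+1} (letter x) = 2"
    by simp
qed

text \<open>Otherwise the residue 2 letter at p+t+3 would also occur on the arc from p to p+t,
  which only holds letters occurring twice already.\<close>

lemma partner_p3_eq: "t = L - 3"
proof (rule ccontr)
  assume "t \<noteq> L - 3"
  then have t6: "t \<le> L - 6"
    using t three_dvd_L by presburger
  have "occ {p..<p+t+1} (letter (p+t+3)) \<noteq> 0"
    by (rule arc_p_covers[OF letter_in_set])
  then have "occ {p..<p+t+1} (letter (p+t+3)) \<ge> 1"
    by simp
  then obtain x where x: "x \<in> {p..<p+t+1}" "letter x = letter (p+t+3)"
    by (rule occ_posE)
  have "(x - k) mod 3 = 2"
    using class2_closed[of "p+t+3" x] x(2) p_class t(4) by presburger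
  then have "x \<in> {p, p+6} \<or> x \<in> {p+3, p+t} \<or> p+6 < x \<and> x < p+t"
    using x(1) p_class t(4) by auto presburger
  thus False
  proof (elim disjE)
    assume "x \<in> {p, p+6}"
    thus False
      using no_three_positions_close[of p "p+6" "p+t+3"] x chord6 t t6 by auto
  next
    assume "x \<in> {p+3, p+t}"
    thus False
      using no_three_positions_close[of "p+3" "p+t" "p+t+3"] x t t6 by auto
  next
    assume "p+6 < x \<and> x < p+t"
    then obtain x1 x2 where "x1 \<in> {p+4..<p+t}" "x2 \<in> {p+4..<p+t}" "x1 < x2"
        "letter x1 = letter x" "letter x2 = letter x"
      using inner_class2_twice \<open>(x - k) mod 3 = 2\<close> by (metis occ_2E)
    thus False
      using no_three_positions_close[of x1 x2 "p+t+3"] x t t6 by auto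
  qed
qed

end

lemma letter_p_add_L_sub_3: "letter (p+L-3) = letter (p+3)"
proof -
  obtain t where "letter (p+t) = letter (p+3)" "9 \<le> t" "t \<le> L - 3" "t mod 3 = 0"
    by (rule partner_p3_exists)
  with partner_p3_eq show ?thesis
    by (metis add_diff_eq)
qed

text \<open>For L > 12, the covering argument on the arc from p+L-3 to p+L+6 would make the residue 2
  letter at p+9 equal to letter p or letter (p+3), a third occurrence of that letter.\<close>

lemma L_eq_12: "L = 12"
proof (rule ccontr)
  assume "L \<noteq> 12"
  then have L15: "15 \<le> L"
    using three_dvd_L L_ge_10 by presburger
  have at: "letter (p+L-3) = letter (p+3)" "letter (p+L) = letter p"
    "letter (p+L+3) = letter (p+3)" "letter (p+L+6) = letter p"
    using letter_p_add_L_sub_3 letter_add_L[of p] letter_add_L[of "p+3"] letter_add_L[of "p+6"] chord6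
    by (simp_all add: algebra_simps)
  have "occ {p+L-3..<p+L+6+1} (letter (p+9)) \<noteq> 0"
  proof (rule class2_arc_covers[OF _ _ _ _ _ letter_in_set])
    show "(p + L - 3 - k) mod 3 = 2" "(p + L + 6 - k) mod 3 = 2"
      using p_class three_dvd_L by presburger+
    show "p + L - 3 < p + L + 6" "p + L + 6 - (p + L - 3) < L"
      using L15 by auto
    fix x assume x: "x \<in> {p+L-3..<p+L+6+1}" "(x - k) mod 3 = 2"
    then have "x \<in> {p+L-3, p+L} \<or> x \<in> {p+L+3, p+L+6}"
      using p_class three_dvd_L by auto presburger
    then have "occ {p+L-3..<p+L+6+1} (letter x) \<ge> 2"
      using occ_ge_2[of "p+L-3" "{p+L-3..<p+L+6+1}" "p+L+3"] occ_ge_2[of "p+L" "{p+L-3..<p+L+6+1}" "p+L+6"]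
        at by auto
    moreover have "occ {p+L-3..<p+L+6+1} (letter x) \<le> 2"
      by (rule occ_le_2[where lo = "p+L-3"]) (use L15 in auto)
    ultimately show "occ {p+L-3..<p+L+6+1} (letter x) = 2"
      by simp
  qed
  then obtain x where x: "x \<in> {p+L-3..<p+L+6+1}" "letter x = letter (p+9)"
    by (metis occ_posE less_one not_less)
  have "(x - k) mod 3 = 2"
    using class2_closed[of "p+9" x] x(2) p_class by presburger
  then have "x \<in> {p+L-3, p+L} \<or> x \<in> {p+L+3, p+L+6}"
    using x(1) p_class three_dvd_L by auto presburger
  then have "letter (p+9) = letter (p+3) \<or> letter (p+9) = letter p"
    using x(2) at by auto
  thus False
    using no_three_positions_close[of p "p+6" "p+9"] no_three_positions_close[of "p+3" "p+9" "p+L-3"]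
      chord6 letter_p_add_L_sub_3 L15 by auto
qed

text \<open>With L = 12 the word, read from position p, is
  y a b z c a y d c z b d.\<close>

lemma word_layout:
  "letter (p+5) = letter (p+1)" "letter (p+8) = letter (p+4)" "letter (p+9) = letter (p+3)"
  "letter (p+10) = letter (p+2)" "letter (p+11) = letter (p+7)"
proof -
  have c0: "(p + 1 - k) mod 3 = 0" "(p + 4 - k) mod 3 = 0" "(p + 7 - k) mod 3 = 0" "(p + 10 - k) mod 3 = 0"
    using p_class by presburger+
  show "letter (p+5) = letter (p+1)" "letter (p+8) = letter (p+4)" "letter (p+11) = letter (p+7)"
    using class0_chord[OF c0(1)] class0_chord[OF c0(2)] class0_chord[OF c0(3)] by (simp_all add: add.assoc)
  have "p + L - 3 = p + 9"
    using L_eq_12 by simp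
  with letter_p_add_L_sub_3 show "letter (p+9) = letter (p+3)"
    by simp
  have "letter (p+10+4) = letter (p+2)"
    using letter_add_L[of "p+2"] L_eq_12 by (simp add: algebra_simps)
  thus "letter (p+10) = letter (p+2)"
    using class0_chord[OF c0(4)] by simp
qed

lemma layout_crossings:
  assumes "a \<in> {letter p, letter (p+1), letter (p+7)}" and "b \<in> {letter (p+2), letter (p+3), letter (p+4)}"
  shows "interlaced w a b \<and> interlaced w b a"
proof -
  note at = chord6 word_layout
  have crossing: "interlaced w (letter i) (letter x)"
    if "letter j = letter i" "letter y = letter x" "i < x" "x < j" "j < y" "y < i + 12" for i j x y
    using interlaced_if_crossing[of i _ j x _ y] that L_eq_12 by simp
  have "interlaced w (letter p) (letter (p+2))" "interlaced w (letter p) (letter (p+3))"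
    "interlaced w (letter p) (letter (p+4))"
    using crossing[of "p+6" p "p+10"] crossing[of "p+6" p "p+9"] crossing[of "p+6" p "p+8"] at by simp_all
  moreover have "interlaced w (letter (p+1)) (letter (p+2))" "interlaced w (letter (p+1)) (letter (p+3))"
    "interlaced w (letter (p+1)) (letter (p+4))"
    using crossing[of "p+5" "p+1" "p+10"] crossing[of "p+5" "p+1" "p+9"] crossing[of "p+5" "p+1" "p+8"]
      at by simp_all
  moreover have "interlaced w (letter (p+2)) (letter (p+7))" "interlaced w (letter (p+3)) (letter (p+7))"
    "interlaced w (letter (p+4)) (letter (p+7))"
    using crossing[of "p+10" "p+2" "p+11"] crossing[of "p+9" "p+3" "p+11"] crossing[of "p+8" "p+4" "p+11"]
      at by simp_all
  ultimately show ?thesis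
    using assms interlaced_sym by blast
qed

lemma layout_sides:
  "card {letter p, letter (p+1), letter (p+7)} = 3" "card {letter (p+2), letter (p+3), letter (p+4)} = 3"
  "{letter p, letter (p+1), letter (p+7)} \<inter> {letter (p+2), letter (p+3), letter (p+4)} = {}"
proof -
  note at = chord6 word_layout
  have differ: "letter x \<noteq> letter y"
    if "letter z = letter x" "x \<noteq> y" "y \<noteq> z" "x \<noteq> z" "p \<le> x" "x < p+12" "p \<le> y" "y < p+12"
      "p \<le> z" "z < p+12" for x y z
    using no_three_positions[of x y z p] that L_eq_12 by auto
  have "letter p \<noteq> letter (p+1)" "letter p \<noteq> letter (p+7)" "letter (p+1) \<noteq> letter (p+7)"
    "letter (p+2) \<noteq> letter (p+3)" "letter (p+2) \<noteq> letter (p+4)" "letter (p+3) \<noteq> letter (p+4)"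
    using differ[of "p+6" p "p+1"] differ[of "p+6" p "p+7"] differ[of "p+5" "p+1" "p+7"]
      differ[of "p+10" "p+2" "p+3"] differ[of "p+10" "p+2" "p+4"] differ[of "p+9" "p+3" "p+4"] at
    by simp_all
  then show "card {letter p, letter (p+1), letter (p+7)} = 3"
    "card {letter (p+2), letter (p+3), letter (p+4)} = 3"
    by simp_all
  show "{letter p, letter (p+1), letter (p+7)} \<inter> {letter (p+2), letter (p+3), letter (p+4)} = {}"
    using layout_crossings unfolding interlaced_def by blast
qed

lemma layout_letters: "set w = {letter p, letter (p+1), letter (p+7), letter (p+2), letter (p+3), letter (p+4)}"
proof
  show "set w \<subseteq> {letter p, letter (p+1), letter (p+7), letter (p+2), letter (p+3), letter (p+4)}"
  proof
    fix b assume "b \<in> set w"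
    then have "occ {p..<p+L} b \<ge> 1"
      using occ_window by simp
    then obtain x where x: "x \<in> {p..<p+L}" "letter x = b"
      by (rule occ_posE)
    then have "x \<in> {p, p+1, p+2, p+3, p+4, p+5, p+6, p+7, p+8, p+9, p+10, p+11}"
      using L_eq_12 by (auto; presburger)
    then show "b \<in> {letter p, letter (p+1), letter (p+7), letter (p+2), letter (p+3), letter (p+4)}"
      using x chord6 word_layout by auto
  qed
qed (simp add: letter_in_set)

lemma interlacement_iso_K33: "graph_iso (set w) (interlaced w) K33_V K33_E"
proof (rule regular3_complete_bipartite_iso_K33[OF cubic _ _ _ _ layout_crossings])
  show "set w = {letter p, letter (p+1), letter (p+7)} \<union> {letter (p+2), letter (p+3), letter (p+4)}"
    using layout_letters by auto
qed (fact layout_sides)+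

end

theorem cubic_3connected_interlacement_iso_K33:
  fixes w :: "nat list"
  assumes "double_occurrence_word w" and "regular 3 (set w) (interlaced w)"
    and "k_connected 3 (set w) (interlaced w)" and "4 < card (set w)"
  shows "graph_iso (set w) (interlaced w) K33_V K33_E"
proof -
  interpret cubic_word w
    by unfold_locales (use assms in auto)
  obtain k where "letter (k+4) = letter k"
    using chord4_exists by blast
  then interpret cubic_word_chord4 w k
    by unfold_locales
  obtain p where "(p - k) mod 3 = 2" "letter (p+6) = letter p"
    using class2_chord6_exists by blast
  then interpret cubic_word_chord6 w k p
    by unfold_locales
  show ?thesis
    by (rule interlacement_iso_K33)
qed

theorem corollary4:
  fixes V :: "'a set" and E :: "'a \<Rightarrow> 'a \<Rightarrow> bool"
  assumes "simple_graph V E"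
    and "regular 3 V E"
    and "circle_graph V E"
    and "\<not> graph_iso V E K4_V K4_E"
    and "\<not> graph_iso V E K33_V K33_E"
  shows "\<not> k_connected 3 V E"
proof
  assume conn: "k_connected 3 V E"
  obtain w :: "nat list" where w: "double_occurrence_word w" and iso: "graph_iso V E (set w) (interlaced w)"
    using assms(3) by (auto simp: circle_graph_def)
  have "card V \<noteq> 4"
    using regular3_card4_iso_K4[OF assms(1,2)] assms(4) by blast
  moreover have "3 < card V" and "card (set w) = card V"
    using conn iso by (auto simp: k_connected_def graph_iso_def bij_betw_same_card)
  ultimately have "4 < card (set w)"
    by simp
  then have "graph_iso (set w) (interlaced w) K33_V K33_E"
    using cubic_3connected_interlacement_iso_K33 w graph_iso_regular[OF iso assms(2)]
      graph_iso_k_connected[OF iso conn] by blast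
  thus False
    using graph_iso_trans[OF iso] assms(5) by blast
qed

end
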